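(* Let $N\geq 2$ and let $\Sigma$ be the one-sided shift on $\{0,1,\dots,N-1\}^{\mathbb{N}_0}$, ordered lexicographically. Then for every $L\geq N+2$ there exists a forbidden order pattern $\pi\in\mathcal{S}_L$ for $\Sigma$.
   Context: $\{0,1,\dots,N-1\}^{\mathbb{N}_0}$ is the set of sequences $\omega=(\omega_0,\omega_1,\dots)$ with $\omega_n\in\{0,\dots,N-1\}$, and $\Sigma(\omega_0,\omega_1,\omega_2,\dots)=(\omega_1,\omega_2,\dots)$. The lexicographic order: $\omega<\omega'$ iff $\omega_0<\omega'_0$, or there is $n\geq1$ with $\omega_k=\omega'_k$ for $k<n$ and $\omega_n<\omega'_n$. $\mathcal{S}_L$ is the set of permutations $\pi=[\pi_0,\dots,\pi_{L-1}]$ of $\{0,\dots,L-1\}$. A sequence $\omega$ defines $\pi$ if $\Sigma^{\pi_0}(\omega)<\Sigma^{\pi_1}(\omega)<\dots<\Sigma^{\pi_{L-1}}(\omega)$. A pattern $\pi\in\mathcal{S}_L$ is forbidden for $\Sigma$ if no $\omega$ defines it. *)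

theory Defs
  imports Main
begin

definition seq_space :: "nat \<Rightarrow> (nat \<Rightarrow> nat) set" where
  "seq_space N = {\<omega>. \<forall>n. \<omega> n < N}"

definition shift :: "(nat \<Rightarrow> nat) \<Rightarrow> (nat \<Rightarrow> nat)" where
  "shift \<omega> = (\<lambda>n. \<omega> (Suc n))"

definition lex_less :: "(nat \<Rightarrow> nat) \<Rightarrow> (nat \<Rightarrow> nat) \<Rightarrow> bool" where
  "lex_less \<omega> \<omega>' \<longleftrightarrow> (\<exists>n. (\<forall>k<n. \<omega> k = \<omega>' k) \<and> \<omega> n < \<omega>' n)"

definition perms :: "nat \<Rightarrow> nat list set" where
  "perms L = {\<pi>. distinct \<pi> \<and> set \<pi> = {0..<L}}"

definition defines_pattern :: "(nat \<Rightarrow> nat) \<Rightarrow> nat list \<Rightarrow> bool" where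
  "defines_pattern \<omega> \<pi> \<longleftrightarrow>
     (\<forall>i. Suc i < length \<pi> \<longrightarrow> lex_less ((shift ^^ (\<pi> ! i)) \<omega>) ((shift ^^ (\<pi> ! Suc i)) \<omega>))"

definition forbidden :: "nat \<Rightarrow> nat list \<Rightarrow> bool" where
  "forbidden N \<pi> \<longleftrightarrow> \<not> (\<exists>\<omega>\<in>seq_space N. defines_pattern \<omega> \<pi>)"

end

theory Submission
  imports Defs
begin

text \<open>If \<open>\<omega>\<close> realises a pattern that places \<open>a\<close> before \<open>b\<close> but \<open>b + 1\<close> before \<open>a + 1\<close>,
  then \<open>\<omega> a < \<omega> b\<close>: with equal first symbols, \<open>\<Sigma>^a \<omega> < \<Sigma>^b \<omega>\<close> would force
  \<open>\<Sigma>^(a+1) \<omega> < \<Sigma>^(b+1) \<omega>\<close>. The zigzag pattern lists \<open>L - 2, L - 4, \<dots>\<close> downwards and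
  then the remaining numbers below \<open>L\<close> upwards; in it any two distinct \<open>a, b < L - 1\<close>
  cross in this way, so a realising \<open>\<omega>\<close> is injective on \<open>{0, \<dots>, L - 2}\<close> and needs
  at least \<open>L - 1\<close> symbols.\<close>

lemma funpow_shift_apply: "(shift ^^ n) \<omega> m = \<omega> (m + n)"
  by (induction n arbitrary: m) (simp_all add: shift_def)

lemma transp_lex_less: "transp lex_less"
proof (rule transpI)
  fix x y z assume "lex_less x y" "lex_less y z"
  then obtain m n where "\<forall>k<m. x k = y k" "x m < y m" "\<forall>k<n. y k = z k" "y n < z n"
    unfolding lex_less_def by blast
  then show "lex_less x z"
    unfolding lex_less_def by (cases m n rule: linorder_cases) (metis order.strict_trans)+
qed

lemma lex_less_irrefl: "\<not> lex_less x x"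
  unfolding lex_less_def by auto

lemma lex_less_asym: "lex_less x y \<Longrightarrow> \<not> lex_less y x"
  using transp_lex_less lex_less_irrefl by (metis transpD)

lemma lex_less_head_le: "lex_less x y \<Longrightarrow> x 0 \<le> y 0"
  unfolding lex_less_def by (metis le_eq_less_or_eq neq0_conv)

lemma lex_less_shift:
  assumes "lex_less x y" "x 0 = y 0" shows "lex_less (shift x) (shift y)"
proof -
  obtain n where n: "\<forall>k<n. x k = y k" "x n < y n" using assms(1) lex_less_def by blast
  with assms(2) obtain m where "n = Suc m" by (cases n) auto
  with n show ?thesis unfolding lex_less_def shift_def by auto
qed

lemma defines_pattern_iff_sorted_wrt:
  "defines_pattern \<omega> \<pi> \<longleftrightarrow> sorted_wrt (\<lambda>a b. lex_less ((shift ^^ a) \<omega>) ((shift ^^ b) \<omega>)) \<pi>"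
proof -
  have "transp (\<lambda>a b. lex_less ((shift ^^ a) \<omega>) ((shift ^^ b) \<omega>))"
    using transp_lex_less by (auto intro: transpI dest: transpD)
  then show ?thesis
    unfolding defines_pattern_def by (simp add: sorted_wrt_iff_nth_Suc_transp)
qed

lemma less_if_shifts_cross:
  assumes "lex_less ((shift ^^ a) \<omega>) ((shift ^^ b) \<omega>)"
    and "lex_less ((shift ^^ Suc b) \<omega>) ((shift ^^ Suc a) \<omega>)"
  shows "\<omega> a < \<omega> b"
proof -
  have "\<omega> a \<le> \<omega> b"
    using lex_less_head_le[OF assms(1)] by (simp add: funpow_shift_apply)
  moreover have "\<omega> a \<noteq> \<omega> b"
  proof
    assume "\<omega> a = \<omega> b"
    then have "lex_less ((shift ^^ Suc a) \<omega>) ((shift ^^ Suc b) \<omega>)"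
      using lex_less_shift[OF assms(1)] by (simp add: funpow_shift_apply)
    with assms(2) show False using lex_less_asym by blast
  qed
  ultimately show ?thesis by simp
qed

text \<open>For \<open>L = 4\<close> this is \<open>[2, 0, 1, 3]\<close>, for \<open>L = 5\<close> it is \<open>[3, 1, 0, 2, 4]\<close>.\<close>
definition zigzag :: "nat \<Rightarrow> nat list" where
  "zigzag L = rev (filter (\<lambda>k. even (L - k)) [0..<L]) @ filter (\<lambda>k. odd (L - k)) [0..<L]"

lemma zigzag_perms: "zigzag L \<in> perms L"
  unfolding zigzag_def perms_def by auto

lemma sorted_wrt_rel_if_less:
  fixes xs :: "'a::linorder list"
  assumes "sorted_wrt R xs" "sorted_wrt (<) xs" "x \<in> set xs" "y \<in> set xs" "x < y"
  shows "R x y"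
  using assms by (induction xs) auto

definition zigzag_before :: "nat \<Rightarrow> nat \<Rightarrow> nat \<Rightarrow> bool" where
  "zigzag_before L x y \<longleftrightarrow>
     even (L - x) \<and> (odd (L - y) \<or> y < x) \<or> odd (L - x) \<and> odd (L - y) \<and> x < y"

lemma sorted_wrt_zigzag:
  assumes "sorted_wrt R (zigzag L)" "x < L" "y < L" "zigzag_before L x y"
  shows "R x y"
proof -
  define D where "D = filter (\<lambda>k. even (L - k)) [0..<L]"
  define A where "A = filter (\<lambda>k. odd (L - k)) [0..<L]"
  have D: "sorted_wrt (\<lambda>a b. R b a) D" and A: "sorted_wrt R A"
    and DA: "\<forall>a\<in>set D. \<forall>b\<in>set A. R a b"
    using assms(1) unfolding zigzag_def D_def A_def sorted_wrt_append sorted_wrt_rev by auto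
  have "sorted_wrt (<) D" "sorted_wrt (<) A"
    unfolding D_def A_def by (simp_all add: sorted_wrt_filter)
  moreover have "x \<in> set D \<longleftrightarrow> even (L - x)" "y \<in> set D \<longleftrightarrow> even (L - y)"
    "x \<in> set A \<longleftrightarrow> odd (L - x)" "y \<in> set A \<longleftrightarrow> odd (L - y)"
    using assms(2,3) unfolding D_def A_def by simp_all
  ultimately show ?thesis
    using D A DA assms(4) sorted_wrt_rel_if_less[of _ D] sorted_wrt_rel_if_less[of _ A]
    unfolding zigzag_before_def by blast
qed

lemma zigzag_crossing:
  assumes "x < L - 1" "y < L - 1" "x \<noteq> y"
  shows "zigzag_before L x y \<and> zigzag_before L (Suc y) (Suc x) \<or>
         zigzag_before L y x \<and> zigzag_before L (Suc x) (Suc y)"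
proof -
  have parity_Suc: "even (L - Suc k) \<longleftrightarrow> odd (L - k)" if "k < L" for k
    using Suc_diff_Suc[OF that] by (metis even_Suc)
  have "even (L - Suc x) \<longleftrightarrow> odd (L - x)" "even (L - Suc y) \<longleftrightarrow> odd (L - y)"
    using assms(1,2) by (intro parity_Suc; linarith)+
  with assms(3) show ?thesis
    unfolding zigzag_before_def Suc_less_eq using less_asym neq_iff by blast
qed

lemma inj_on_if_defines_zigzag:
  assumes "defines_pattern \<omega> (zigzag L)"
  shows "inj_on \<omega> {..<L - 1}"
proof -
  let ?R = "\<lambda>a b. lex_less ((shift ^^ a) \<omega>) ((shift ^^ b) \<omega>)"
  have less: "\<omega> a < \<omega> b"
    if "a < L - 1" "b < L - 1" "zigzag_before L a b" "zigzag_before L (Suc b) (Suc a)" for a b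
  proof (rule less_if_shifts_cross[where \<omega> = \<omega> and a = a and b = b])
    have sorted: "sorted_wrt ?R (zigzag L)"
      using assms by (simp add: defines_pattern_iff_sorted_wrt)
    have "a < L" "b < L" "Suc a < L" "Suc b < L"
      using that(1,2) by linarith+
    then show "?R a b" "?R (Suc b) (Suc a)"
      using sorted_wrt_zigzag[OF sorted] that(3,4) by blast+
  qed
  show ?thesis
  proof (rule inj_onI, rule ccontr)
    fix x y assume "x \<in> {..<L - 1}" "y \<in> {..<L - 1}" "\<omega> x = \<omega> y" "x \<noteq> y"
    then show False
      using zigzag_crossing[of x L y] less[of x y] less[of y x] by fastforce
  qed
qed

theorem proposition4:
  fixes N L :: nat
  assumes "N \<ge> 2" and "L \<ge> N + 2"
  shows "\<exists>\<pi>\<in>perms L. forbidden N \<pi>"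
proof
  show "zigzag L \<in> perms L" by (rule zigzag_perms)
  show "forbidden N (zigzag L)"
    unfolding forbidden_def
  proof
    assume "\<exists>\<omega>\<in>seq_space N. defines_pattern \<omega> (zigzag L)"
    then obtain \<omega> where range: "\<forall>n. \<omega> n < N" and pattern: "defines_pattern \<omega> (zigzag L)"
      unfolding seq_space_def by blast
    have "card {..<L - 1} \<le> card {..<N}"
      using inj_on_if_defines_zigzag[OF pattern] range by (intro card_inj_on_le) auto
    with assms(2) show False by simp
  qed
qed

end
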